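(* Let $X$ be a topological space and $A$ a finitely non-Hausdorff subset of $X$. Then $\overline{A}$ is a finitely non-Hausdorff subset of $X$.
   Context: A non-empty subset $A$ of a topological space $X$ is called finitely non-Hausdorff if for every non-empty finite subset $F\subseteq A$ and every family $\{U_x:x\in F\}$ where each $U_x$ is an open neighborhood of $x$, we have $\bigcap_{x\in F}U_x\neq\emptyset$. *)

theory Defs
  imports "HOL-Analysis.Analysis"
begin

definition finitely_non_hausdorff :: "'a topology \<Rightarrow> 'a set \<Rightarrow> bool" where
  "finitely_non_hausdorff X A \<longleftrightarrow>
     A \<subseteq> topspace X \<and> A \<noteq> {} \<and>
     (\<forall>F U. finite F \<and> F \<noteq> {} \<and> F \<subseteq> A \<and>
            (\<forall>x\<in>F. openin X (U x) \<and> x \<in> U x)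
            \<longrightarrow> (\<Inter>x\<in>F. U x) \<noteq> {})"

end

theory Submission
  imports Defs
begin

text \<open>Every point x of a finite F \<subseteq> closure A is approximated by some p x \<in> A \<inter> U x.
  The intersection of the U x over the fibre of p above y is an open neighbourhood of y,
  and these finitely many neighbourhoods of points of A have the same total intersection
  as the U x, which is therefore non-empty.\<close>

lemma finitely_non_hausdorffD:
  assumes "finitely_non_hausdorff X A" "finite F" "F \<noteq> {}" "F \<subseteq> A"
    and "\<forall>x\<in>F. openin X (U x) \<and> x \<in> U x"
  shows "(\<Inter>x\<in>F. U x) \<noteq> {}"
  using assms unfolding finitely_non_hausdorff_def by blast

lemma INT_fibres_image: "(\<Inter>y\<in>p ` F. \<Inter>x\<in>{x\<in>F. p x = y}. U x) = (\<Inter>x\<in>F. U x)"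
  by blast

lemma finitely_non_hausdorff_INT_closure_of:
  assumes fnh: "finitely_non_hausdorff X A"
    and F: "finite F" "F \<noteq> {}" "F \<subseteq> X closure_of A"
    and U: "\<forall>x\<in>F. openin X (U x) \<and> x \<in> U x"
  shows "(\<Inter>x\<in>F. U x) \<noteq> {}"
proof -
  have "\<forall>x\<in>F. \<exists>y. y \<in> A \<and> y \<in> U x"
    using F(3) U by (meson in_closure_of subsetD)
  then obtain p where p: "\<And>x. x \<in> F \<Longrightarrow> p x \<in> A \<and> p x \<in> U x"
    by metis
  define V where "V y = (\<Inter>x\<in>{x\<in>F. p x = y}. U x)" for y
  have V: "\<forall>y\<in>p ` F. openin X (V y) \<and> y \<in> V y"
  proof
    fix y assume "y \<in> p ` F"
    then show "openin X (V y) \<and> y \<in> V y"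
      unfolding V_def using F(1) U p by (auto intro: openin_Inter) metis
  qed
  have "p ` F \<subseteq> A"
    using p by blast
  then have "(\<Inter>y\<in>p ` F. V y) \<noteq> {}"
    using finitely_non_hausdorffD[OF fnh _ _ _ V] F(1,2) by simp
  then show ?thesis
    unfolding V_def INT_fibres_image .
qed

theorem corollary2p7:
  fixes X :: "'a topology" and A :: "'a set"
  assumes "finitely_non_hausdorff X A"
  shows "finitely_non_hausdorff X (X closure_of A)"
proof -
  have "A \<subseteq> topspace X" "A \<noteq> {}"
    using assms unfolding finitely_non_hausdorff_def by auto
  then have "X closure_of A \<noteq> {}"
    using closure_of_subset by blast
  then show ?thesis
    unfolding finitely_non_hausdorff_def
    using finitely_non_hausdorff_INT_closure_of[OF assms] closure_of_subset_topspace
    by (metis (no_types, lifting))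
qed

end
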